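(* Consider the cone percolation process on $\mathbb{T}_d^+$ ($d\ge2$) with radius of influence distributed as $R$. Let $\rho$ be the smallest non-negative root of $\mathbb{E}(\rho^{d^R}) + (1-\rho)p_0 = \rho$, and let $\psi$ be the smallest non-negative root of $\mathbb{E}\big(\psi^{\frac{d}{d-1}(d^R-1)}\big) = \psi$. Then $$1-\rho \le \mathbb{P}_+[V] \le 1-\psi.$$
   Context: Let $d\ge 2$ and let $\mathbb{T}_d$ be the infinite tree in which every vertex has exactly $d+1$ neighbours. Fix a vertex $\mathcal{O}$ (the origin); $d(u,v)$ denotes graph distance. Write $u\le v$ if $u$ lies on the path from $\mathcal{O}$ to $v$ (so $\mathcal{O}\le v$ for all $v$). Fix a neighbour $w$ of $\mathcal{O}$ and let $\mathbb{T}_d^+$ be the subtree obtained by deleting all vertices $x$ with $w\le x$; in $\mathbb{T}_d^+$ every vertex $u$ has exactly $d$ neighbours $x$ with $u\le x$ (its children). Let $R$ be a random variable with values in $\{0,1,2,\dots\}$, $p_k=\mathbb{P}(R=k)$, and assume $p_0\in(0,1)$. Cone percolation on $G\in\{\mathbb{T}_d,\mathbb{T}_d^+\}$: to each vertex $u$ of $G$ attach an independent copy $R_u$ of $R$; let $B_u=\{v\in G: u\le v,\ d(u,v)\le R_u\}$; set $I_0=\{\mathcal{O}\}$, $I_{n+1}=\bigcup_{u\in I_n}B_u$ for $n\ge0$, $I=\bigcup_{n\ge0}I_n$, and let $V$ be the event $\{|I|=\infty\}$ (survival). $\mathbb{P}_+$ and $\mathbb{P}$ denote the probability measures of the process on $\mathbb{T}_d^+$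 and on $\mathbb{T}_d$ respectively. Convention: $x^0=1$ for all $x\ge0$. *)

theory Defs
  imports "HOL-Probability.Probability"
begin

text \<open>Vertices of the rooted tree T_d^+: finite words over the alphabet {0..<d};
  the origin is the empty word, the children of u are u @ [i] for i < d.
  u \<le> v (u on the path from the origin to v) is the prefix relation, and for u \<le> v
  the graph distance d(u,v) equals length v - length u.\<close>

definition tree_plus :: "nat \<Rightarrow> nat list set" where
  "tree_plus d = {u. \<forall>i\<in>set u. i < d}"

definition tree_le :: "nat list \<Rightarrow> nat list \<Rightarrow> bool" where
  "tree_le u v \<longleftrightarrow> (\<exists>w. v = u @ w)"

definition cone :: "nat \<Rightarrow> nat list \<Rightarrow> nat \<Rightarrow> nat list set" where
  "cone d u r = {v \<in> tree_plus d. tree_le u v \<and> length v - length u \<le> r}"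

fun infected :: "nat \<Rightarrow> (nat list \<Rightarrow> nat) \<Rightarrow> nat \<Rightarrow> nat list set" where
  "infected d \<omega> 0 = {[]}"
| "infected d \<omega> (Suc n) = (\<Union>u\<in>infected d \<omega> n. cone d u (\<omega> u))"

definition infected_all :: "nat \<Rightarrow> (nat list \<Rightarrow> nat) \<Rightarrow> nat list set" where
  "infected_all d \<omega> = (\<Union>n. infected d \<omega> n)"

definition cone_space :: "nat \<Rightarrow> nat pmf \<Rightarrow> (nat list \<Rightarrow> nat) measure" where
  "cone_space d p = PiM (tree_plus d) (\<lambda>_. measure_pmf p)"

definition survival :: "nat \<Rightarrow> nat pmf \<Rightarrow> (nat list \<Rightarrow> nat) set" where
  "survival d p = {\<omega> \<in> space (cone_space d p). infinite (infected_all d \<omega>)}"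

definition cpow :: "real \<Rightarrow> real \<Rightarrow> real" where
  "cpow x e = (if e = 0 then 1 else x powr e)"

end

theory Submission
  imports Defs
begin

text \<open>
  A vertex v is infected iff the path from the origin to v can be covered by
  successive cones; walking down the path we only need to remember the radius still
  "inherited" from the ancestors.  This yields a purely local recursion: with
  F n t = probability that no vertex at depth n is infected when the origin's radius is
  raised to at least t, independence of the root radius and of the d child subtrees gives
    F (n+1) t = \<Sum>r p_r (if max t r = 0 then 1 else F n (max t r - 1) ^ d),
  and P_+[V] = 1 - lim F n 0.
  Lower bound: by induction on n, F n t \<le> \<rho> ^ (d ^ t), using the fixed-point equation of \<rho>.
  Upper bound: the limits f t = lim F n t satisfy f 0 * f j ^ d \<le> f (j+1), hence
  f 0 ^ (1 + d + ... + d^k) \<le> f k, so f 0 is a super-solution of x = E x ^ (N R) with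
  N r = d + ... + d^r = d/(d-1) (d^r - 1); iterating this generating function from 0
  produces a fixed point below f 0, which therefore lies above \<psi>.
\<close>

section \<open>Infection along paths\<close>

lemma tree_plus_Nil [simp]: "[] \<in> tree_plus d"
  by (simp add: tree_plus_def)

lemma tree_plus_Cons [simp]: "c # v \<in> tree_plus d \<longleftrightarrow> c < d \<and> v \<in> tree_plus d"
  by (auto simp add: tree_plus_def)

definition shift :: "nat \<Rightarrow> (nat list \<Rightarrow> nat) \<Rightarrow> (nat list \<Rightarrow> nat)" where
  "shift c \<omega> = (\<lambda>u. \<omega> (c # u))"

definition boost :: "nat \<Rightarrow> (nat list \<Rightarrow> nat) \<Rightarrow> (nat list \<Rightarrow> nat)" where
  "boost t \<omega> = fun_upd \<omega> [] (max t (\<omega> []))"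

inductive reachable :: "nat \<Rightarrow> (nat list \<Rightarrow> nat) \<Rightarrow> nat list \<Rightarrow> bool" for d \<omega> where
  origin: "reachable d \<omega> []"
| step: "reachable d \<omega> u \<Longrightarrow> v \<in> cone d u (\<omega> u) \<Longrightarrow> reachable d \<omega> v"

lemma infected_imp_reachable: "v \<in> infected d \<omega> n \<Longrightarrow> reachable d \<omega> v"
proof (induction n arbitrary: v)
  case 0
  then show ?case by (simp add: reachable.origin)
next
  case (Suc n)
  then obtain u where "u \<in> infected d \<omega> n" "v \<in> cone d u (\<omega> u)" by auto
  then show ?case using Suc.IH reachable.step by blast
qed

lemma reachable_imp_infected: "reachable d \<omega> v \<Longrightarrow> \<exists>n. v \<in> infected d \<omega> n"
proof (induction rule: reachable.induct)
  case origin
  have "[] \<in> infected d \<omega> 0" by simp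
  then show ?case by blast
next
  case (step u v)
  then obtain n where "u \<in> infected d \<omega> n" by auto
  then have "v \<in> infected d \<omega> (Suc n)" using step by auto
  then show ?case by blast
qed

lemma infected_all_eq_reachable: "infected_all d \<omega> = {v. reachable d \<omega> v}"
  unfolding infected_all_def
  using infected_imp_reachable reachable_imp_infected by (auto simp del: infected.simps)

text \<open>open_path t \<omega> v: walking from the origin to v, the radius available at each vertex
  (its own or the one inherited from above, minus the distance travelled) never runs out;
  t is the radius inherited by the origin.\<close>
fun open_path :: "nat \<Rightarrow> (nat list \<Rightarrow> nat) \<Rightarrow> nat list \<Rightarrow> bool" where
  "open_path t \<omega> [] = True"
| "open_path t \<omega> (c # v) =
     (1 \<le> max t (\<omega> []) \<and> open_path (max t (\<omega> []) - 1) (shift c \<omega>) v)"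

lemma reachable_boost_Cons:
  assumes c: "c < d" and m: "1 \<le> max t (\<omega> [])"
    and r: "reachable d (boost (max t (\<omega> []) - 1) (shift c \<omega>)) u"
  shows "reachable d (boost t \<omega>) (c # u)"
  using r
proof (induction rule: reachable.induct)
  case origin
  have "[c] \<in> cone d [] (boost t \<omega> [])"
    using c m by (simp add: cone_def tree_le_def boost_def)
  then show ?case by (rule reachable.step[OF reachable.origin])
next
  case (step u v)
  let ?W = "boost t \<omega>"
  show ?case
  proof (cases "u = []")
    case True
    with step have v: "v \<in> tree_plus d" "length v \<le> max (max t (\<omega> []) - 1) (\<omega> [c])"
      by (auto simp: cone_def boost_def shift_def)
    show ?thesis
    proof (cases "\<omega> [c] \<ge> max t (\<omega> []) - 1")
      case True
      have rc: "reachable d ?W [c]"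
        using c m by (auto intro!: reachable.step[OF reachable.origin]
            simp: cone_def tree_le_def boost_def)
      have "c # v \<in> cone d [c] (?W [c])"
        using v True c by (auto simp: cone_def tree_le_def boost_def)
      then show ?thesis by (rule reachable.step[OF rc])
    next
      case False
      have "c # v \<in> cone d [] (?W [])"
        using v False c by (auto simp: cone_def tree_le_def boost_def)
      then show ?thesis by (rule reachable.step[OF reachable.origin])
    qed
  next
    case False
    with step have "c # v \<in> cone d (c # u) (?W (c # u))"
      using c by (auto simp: cone_def tree_le_def shift_def boost_def)
    then show ?thesis by (rule reachable.step[OF step.IH])
  qed
qed

lemma open_path_imp_reachable:
  "open_path t \<omega> v \<Longrightarrow> v \<in> tree_plus d \<Longrightarrow> reachable d (boost t \<omega>) v"
proof (induction v arbitrary: t \<omega>)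
  case Nil
  then show ?case by (simp add: reachable.origin)
next
  case (Cons c v)
  then have "c < d" "1 \<le> max t (\<omega> [])"
    and "reachable d (boost (max t (\<omega> []) - 1) (shift c \<omega>)) v"
    by auto
  then show ?case by (rule reachable_boost_Cons)
qed

lemma open_path_short: "length w \<le> max t (\<omega> []) \<Longrightarrow> open_path t \<omega> w"
  by (induction w arbitrary: t \<omega>) auto

lemma open_path_extend:
  "open_path t \<omega> u \<Longrightarrow> length w \<le> boost t \<omega> u \<Longrightarrow> open_path t \<omega> (u @ w)"
proof (induction u arbitrary: t \<omega>)
  case Nil
  then show ?case by (simp add: boost_def open_path_short)
next
  case (Cons c u)
  then have h: "1 \<le> max t (\<omega> [])" "open_path (max t (\<omega> []) - 1) (shift c \<omega>) u" by auto
  have "boost t \<omega> (c # u) \<le> boost (max t (\<omega> []) - 1) (shift c \<omega>) u"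
    by (auto simp: boost_def shift_def)
  with Cons h show ?case by auto
qed

lemma reachable_imp_open_path:
  "reachable d (boost t \<omega>) v \<Longrightarrow> open_path t \<omega> v \<and> v \<in> tree_plus d"
proof (induction rule: reachable.induct)
  case origin
  then show ?case by simp
next
  case (step u v)
  then obtain w where v: "v = u @ w" "v \<in> tree_plus d" "length w \<le> boost t \<omega> u"
    by (auto simp: cone_def tree_le_def)
  then show ?case using step open_path_extend by blast
qed

lemma infected_all_iff_open_path:
  "v \<in> infected_all d \<omega> \<longleftrightarrow> v \<in> tree_plus d \<and> open_path 0 \<omega> v"
proof -
  have "boost 0 \<omega> = \<omega>" by (auto simp: boost_def)
  then show ?thesis
    unfolding infected_all_eq_reachable
    using open_path_imp_reachable[of 0 \<omega> v d] reachable_imp_open_path[of d 0 \<omega> v] by auto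
qed

lemma open_path_prefix: "open_path t \<omega> (u @ w) \<Longrightarrow> open_path t \<omega> u"
  by (induction u arbitrary: t \<omega>) auto

text \<open>It is defined by the recursion over the root and its children that the
  probabilistic analysis uses.\<close>
fun reaches_depth :: "nat \<Rightarrow> nat \<Rightarrow> nat \<Rightarrow> (nat list \<Rightarrow> nat) \<Rightarrow> bool" where
  "reaches_depth d 0 t \<omega> = True"
| "reaches_depth d (Suc n) t \<omega> =
     (1 \<le> max t (\<omega> []) \<and> (\<exists>c<d. reaches_depth d n (max t (\<omega> []) - 1) (shift c \<omega>)))"

lemma reaches_depth_iff_open_path:
  "reaches_depth d n t \<omega> \<longleftrightarrow> (\<exists>v \<in> tree_plus d. length v = n \<and> open_path t \<omega> v)"
proof (induction n arbitrary: t \<omega>)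
  case 0
  then show ?case by (auto intro: bexI[of _ "[]"])
next
  case (Suc n)
  show ?case
  proof
    assume "reaches_depth d (Suc n) t \<omega>"
    then obtain c where c: "c < d" "1 \<le> max t (\<omega> [])"
      "reaches_depth d n (max t (\<omega> []) - 1) (shift c \<omega>)" by auto
    then obtain v where "v \<in> tree_plus d" "length v = n"
      "open_path (max t (\<omega> []) - 1) (shift c \<omega>) v"
      using Suc.IH by blast
    then show "\<exists>v \<in> tree_plus d. length v = Suc n \<and> open_path t \<omega> v"
      using c by (intro bexI[of _ "c # v"]) auto
  next
    assume "\<exists>v \<in> tree_plus d. length v = Suc n \<and> open_path t \<omega> v"
    then obtain c v where "c # v \<in> tree_plus d" "length v = n" "open_path t \<omega> (c # v)"
      by (metis length_Suc_conv)
    then show "reaches_depth d (Suc n) t \<omega>" using Suc.IH by auto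
  qed
qed

text \<open>Survival means that every depth is reached (the tree is locally finite).\<close>
lemma infinite_iff_reaches_all_depths:
  "infinite (infected_all d \<omega>) \<longleftrightarrow> (\<forall>n. reaches_depth d n 0 \<omega>)"
proof
  assume inf: "infinite (infected_all d \<omega>)"
  show "\<forall>n. reaches_depth d n 0 \<omega>"
  proof
    fix n
    have "finite {v. set v \<subseteq> {..<d} \<and> length v \<le> n}"
      by (rule finite_lists_length_le) simp
    then have "\<not> infected_all d \<omega> \<subseteq> {v. set v \<subseteq> {..<d} \<and> length v \<le> n}"
      using inf finite_subset by blast
    then obtain v where v: "v \<in> infected_all d \<omega>" "\<not> (set v \<subseteq> {..<d} \<and> length v \<le> n)"
      by blast
    then have vt: "v \<in> tree_plus d" "open_path 0 \<omega> v"
      using infected_all_iff_open_path by auto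
    with v have "length (take n v) = n" by (auto simp: tree_plus_def)
    moreover have "take n v \<in> tree_plus d" "open_path 0 \<omega> (take n v)"
      using vt open_path_prefix[of 0 \<omega> "take n v" "drop n v"]
      by (auto simp: tree_plus_def dest: in_set_takeD)
    ultimately show "reaches_depth d n 0 \<omega>"
      using reaches_depth_iff_open_path by blast
  qed
next
  assume all: "\<forall>n. reaches_depth d n 0 \<omega>"
  show "infinite (infected_all d \<omega>)"
  proof
    assume "finite (infected_all d \<omega>)"
    then obtain N where N: "\<forall>x \<in> length ` infected_all d \<omega>. x \<le> N"
      using finite_nat_set_iff_bounded_le by blast
    from all obtain v where "v \<in> tree_plus d" "length v = Suc N" "open_path 0 \<omega> v"
      using reaches_depth_iff_open_path by blast
    then have "v \<in> infected_all d \<omega>" using infected_all_iff_open_path by blast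
    with N \<open>length v = Suc N\<close> show False by force
  qed
qed

lemma reaches_depth_Suc_imp: "reaches_depth d (Suc n) t \<omega> \<Longrightarrow> reaches_depth d n t \<omega>"
proof (induction n arbitrary: t \<omega>)
  case 0
  then show ?case by simp
next
  case (Suc n)
  from Suc.prems obtain c where c: "c < d" "1 \<le> max t (\<omega> [])"
    "reaches_depth d (Suc n) (max t (\<omega> []) - 1) (shift c \<omega>)"
    by (simp only: reaches_depth.simps) blast
  from c(3) have "reaches_depth d n (max t (\<omega> []) - 1) (shift c \<omega>)" by (rule Suc.IH)
  with c show ?case by (simp only: reaches_depth.simps) blast
qed

lemma reaches_depth_cong:
  "(\<And>u. u \<in> tree_plus d \<Longrightarrow> \<omega> u = \<omega>' u) \<Longrightarrow> reaches_depth d n t \<omega> = reaches_depth d n t \<omega>'"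
proof (induction n arbitrary: t \<omega> \<omega>')
  case 0
  then show ?case by simp
next
  case (Suc n)
  have "reaches_depth d n (max t (\<omega> []) - 1) (shift c \<omega>)
      = reaches_depth d n (max t (\<omega> []) - 1) (shift c \<omega>')" if "c < d" for c
    by (rule Suc.IH) (use Suc.prems that in \<open>auto simp: shift_def\<close>)
  moreover have "\<omega> [] = \<omega>' []" using Suc.prems by simp
  ultimately show ?case by auto
qed

section \<open>The extinction probabilities and their recursion\<close>

lemma prob_space_cone_space: "prob_space (cone_space d p)"
  unfolding cone_space_def by (rule prob_space_PiM) (rule prob_space_measure_pmf)

text \<open>Every coordinate is measurable, also outside the index set (where it is constant).\<close>
lemma measurable_coordinate:
  "(\<lambda>\<omega>. \<omega> x) \<in> measurable (PiM K (\<lambda>_. measure_pmf p)) (count_space UNIV)"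
proof (cases "x \<in> K")
  case True
  then have "(\<lambda>\<omega>. \<omega> x) \<in> measurable (PiM K (\<lambda>_. measure_pmf p)) (measure_pmf p)"
    by (rule measurable_component_singleton)
  then show ?thesis by simp
next
  case False
  let ?N = "PiM K (\<lambda>_. measure_pmf p)"
  have "\<And>\<omega>. \<omega> \<in> space ?N \<Longrightarrow> \<omega> x = undefined"
    using False by (auto simp: space_PiM PiE_def extensional_def)
  then show ?thesis
    using measurable_cong[of ?N "\<lambda>\<omega>. \<omega> x" "\<lambda>_. undefined" "count_space UNIV"] by simp
qed

lemma measurable_reaches_depth:
  "Measurable.pred (PiM K (\<lambda>_. measure_pmf p)) (\<lambda>\<omega>. reaches_depth d n t (\<lambda>u. \<omega> (w @ u)))"
proof (induction n arbitrary: t w)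
  case 0
  then show ?case by simp
next
  case (Suc n)
  let ?N = "PiM K (\<lambda>_. measure_pmf p)"
  define f where "f = (\<lambda>r \<omega>. 1 \<le> max t r \<and>
    (\<exists>c\<in>{..<d}. reaches_depth d n (max t r - 1) (\<lambda>u. \<omega> ((w @ [c]) @ u))))"
  have "Measurable.pred ?N (f r)" for r
  proof (cases "1 \<le> max t r")
    case True
    have "Measurable.pred ?N
        (\<lambda>\<omega>. \<exists>c\<in>{..<d}. reaches_depth d n (max t r - 1) (\<lambda>u. \<omega> ((w @ [c]) @ u)))"
      by (rule pred_intros_finite(4)) (simp, rule Suc.IH)
    then show ?thesis using True by (simp add: f_def)
  next
    case False
    then have "f r = (\<lambda>\<omega>. False)" unfolding f_def by blast
    then show ?thesis by simp
  qed
  then have "Measurable.pred ?N (\<lambda>\<omega>. f (\<omega> w) \<omega>)"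
    by (rule measurable_compose_countable[OF _ measurable_coordinate])
  moreover have "(\<lambda>\<omega>. f (\<omega> w) \<omega>) = (\<lambda>\<omega>. reaches_depth d (Suc n) t (\<lambda>u. \<omega> (w @ u)))"
    unfolding f_def by (simp add: shift_def lessThan_def)
  ultimately show ?case by simp
qed

lemma sets_reaches_depth:
  "{\<omega> \<in> space (cone_space d p). reaches_depth d n t \<omega>} \<in> sets (cone_space d p)"
  "{\<omega> \<in> space (cone_space d p). \<not> reaches_depth d n t \<omega>} \<in> sets (cone_space d p)"
  using measurable_reaches_depth[where K="tree_plus d" and w="[]"]
    pred_intros_logic(2)[OF measurable_reaches_depth[where K="tree_plus d" and w="[]"]]
  unfolding cone_space_def Measurable.pred_def by simp_all

lemma sets_root_eq: "{\<omega> \<in> space (cone_space d p). \<omega> [] = r} \<in> sets (cone_space d p)"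
  using measurable_coordinate[of "[]" "tree_plus d" p]
  unfolding cone_space_def by (simp add: measurable_count_space_eq2)

definition extinction_prob :: "nat \<Rightarrow> nat pmf \<Rightarrow> nat \<Rightarrow> nat \<Rightarrow> real" where
  "extinction_prob d p n t =
     measure (cone_space d p) {\<omega> \<in> space (cone_space d p). \<not> reaches_depth d n t \<omega>}"

lemma extinction_prob_0: "extinction_prob d p 0 t = 0"
  by (simp add: extinction_prob_def)

lemma extinction_prob_bounds: "0 \<le> extinction_prob d p n t" "extinction_prob d p n t \<le> 1"
proof -
  interpret P: prob_space "cone_space d p" by (rule prob_space_cone_space)
  show "0 \<le> extinction_prob d p n t" "extinction_prob d p n t \<le> 1"
    by (simp_all add: extinction_prob_def)
qed

lemma extinction_prob_mono: "extinction_prob d p n t \<le> extinction_prob d p (Suc n) t"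
proof -
  let ?M = "cone_space d p"
  interpret P: prob_space ?M by (rule prob_space_cone_space)
  from sets_reaches_depth(2) show ?thesis unfolding extinction_prob_def
    by (rule P.finite_measure_mono[rotated])
      (auto intro: reaches_depth_Suc_imp simp del: reaches_depth.simps)
qed

lemma indep_coordinates:
  "prob_space.indep_vars (cone_space d p) (\<lambda>_. measure_pmf p) (\<lambda>i \<omega>. \<omega> i) (tree_plus d)"
proof -
  interpret P: prob_space "cone_space d p" by (rule prob_space_cone_space)
  let ?M = "cone_space d p" and ?T = "tree_plus d"
  have rv: "P.random_variable (measure_pmf p) (\<lambda>\<omega>. \<omega> i)" if "i \<in> ?T" for i
    unfolding cone_space_def using that by (rule measurable_component_singleton)
  have "distr ?M (PiM ?T (\<lambda>_. measure_pmf p)) (\<lambda>x. \<lambda>i\<in>?T. x i) = distr ?M ?M (\<lambda>x. x)"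
    by (rule distr_cong) (auto simp: cone_space_def space_PiM)
  also have "\<dots> = PiM ?T (\<lambda>i. distr ?M (measure_pmf p) (\<lambda>\<omega>. \<omega> i))"
    unfolding cone_space_def distr_id
    by (rule PiM_cong[OF refl])
      (rule distr_PiM_component[symmetric]; simp add: prob_space_measure_pmf)
  finally have "distr ?M (PiM ?T (\<lambda>_. measure_pmf p)) (\<lambda>x. \<lambda>i\<in>?T. x i)
      = PiM ?T (\<lambda>i. distr ?M (measure_pmf p) (\<lambda>\<omega>. \<omega> i))" .
  moreover have "?T \<noteq> {}" using tree_plus_Nil by blast
  ultimately show ?thesis
    by (subst P.indep_vars_iff_distr_eq_PiM'[OF _ rv]) auto
qed

lemma prob_root_eq: "measure (cone_space d p) {\<omega> \<in> space (cone_space d p). \<omega> [] = r} = pmf p r"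
proof -
  have "measure (cone_space d p) {\<omega> \<in> space (cone_space d p). \<omega> [] = r}
      = measure (distr (cone_space d p) (measure_pmf p) (\<lambda>\<omega>. \<omega> [])) {r}"
    by (subst measure_distr) (auto simp: cone_space_def intro!: arg_cong[where f="measure _"])
  also have "\<dots> = pmf p r"
    unfolding cone_space_def
    by (subst distr_PiM_component) (auto simp: prob_space_measure_pmf measure_pmf_single)
  finally show ?thesis .
qed

text \<open>Each child subtree is a copy of the whole tree: the shifted configuration has the
  same law.\<close>
lemma prob_child_extinct:
  assumes "c < d"
  shows "measure (cone_space d p) {\<omega> \<in> space (cone_space d p). \<not> reaches_depth d n s (shift c \<omega>)}
       = extinction_prob d p n s"
proof -
  let ?M = "cone_space d p" and ?T = "tree_plus d"
  let ?S = "{\<omega> \<in> space ?M. \<not> reaches_depth d n s \<omega>}"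
  define g :: "(nat list \<Rightarrow> nat) \<Rightarrow> nat list \<Rightarrow> nat" where "g = (\<lambda>\<omega>. \<lambda>u\<in>?T. \<omega> (c # u))"
  have law: "distr ?M ?M g = ?M"
    unfolding cone_space_def g_def
    using distr_PiM_reindex[of ?T "\<lambda>_. measure_pmf p" "Cons c" ?T] assms
    by (simp add: prob_space_measure_pmf inj_on_def)
  have gm: "g \<in> measurable ?M ?M"
    unfolding g_def cone_space_def
    by (rule measurable_restrict) (use assms in \<open>auto intro: measurable_component_singleton\<close>)
  have S: "?S \<in> sets ?M" by (rule sets_reaches_depth(2))
  have "reaches_depth d n s (g \<omega>) = reaches_depth d n s (shift c \<omega>)" for \<omega>
    by (rule reaches_depth_cong) (simp add: g_def shift_def)
  then have pre: "g -` ?S \<inter> space ?M = {\<omega> \<in> space ?M. \<not> reaches_depth d n s (shift c \<omega>)}"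
    using measurable_space[OF gm] by auto
  have "extinction_prob d p n s = measure (distr ?M ?M g) ?S"
    unfolding extinction_prob_def law ..
  also have "\<dots> = measure ?M (g -` ?S \<inter> space ?M)"
    by (rule measure_distr[OF gm S])
  finally show ?thesis unfolding pre by simp
qed

text \<open>The root radius and the d child subtrees depend on disjoint sets of coordinates, so
  "the root has radius r and every child subtree dies out" factorises.\<close>
lemma prob_root_children_extinct:
  "measure (cone_space d p)
      {\<omega> \<in> space (cone_space d p). \<omega> [] = r \<and> (\<forall>c<d. \<not> reaches_depth d n s (shift c \<omega>))}
     = pmf p r * extinction_prob d p n s ^ d"
proof -
  let ?M = "cone_space d p" and ?T = "tree_plus d" and ?P = "\<lambda>_::nat list. measure_pmf p"
  interpret P: prob_space ?M by (rule prob_space_cone_space)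
  \<comment> \<open>block 0 is the root, block j+1 the subtree of child j\<close>
  define K :: "nat \<Rightarrow> nat list set" where
    "K j = (if j = 0 then {[]} else Cons (j - 1) ` ?T)" for j
  define L where "L = {..<Suc d}"
  have "disjoint_family_on K L" unfolding disjoint_family_on_def K_def by auto
  moreover have "K j \<subseteq> ?T" if "j \<in> L" for j using that by (auto simp: K_def L_def)
  ultimately have ind: "P.indep_vars (\<lambda>j. PiM (K j) ?P) (\<lambda>j \<omega>. restrict \<omega> (K j)) L"
    using P.indep_vars_restrict[OF indep_coordinates] by blast
  define A where "A j = (if j = 0 then {f \<in> space (PiM (K j) ?P). f [] = r}
       else {f \<in> space (PiM (K j) ?P). \<not> reaches_depth d n s (\<lambda>u. f ([j - 1] @ u))})" for j
  have A: "A j \<in> sets (PiM (K j) ?P)" for j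
  proof (cases "j = 0")
    case True
    have "Measurable.pred (PiM (K j) ?P) (\<lambda>f. f [] \<in> {r})"
      by (rule pred_sets2[OF _ measurable_coordinate]) simp
    then show ?thesis using True by (simp add: A_def Measurable.pred_def)
  next
    case False
    have "Measurable.pred (PiM (K j) ?P) (\<lambda>f. \<not> reaches_depth d n s (\<lambda>u. f ([j - 1] @ u)))"
      by (rule pred_intros_logic(2)) (rule measurable_reaches_depth)
    then show ?thesis using False by (simp add: A_def Measurable.pred_def)
  qed
  define B where "B j = (if j = 0 then {\<omega> \<in> space ?M. \<omega> [] = r}
       else {\<omega> \<in> space ?M. \<not> reaches_depth d n s (shift (j - 1) \<omega>)})" for j
  have AB: "(\<lambda>\<omega>. restrict \<omega> (K j)) -` A j \<inter> space ?M = B j" if "j \<in> L" for j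
  proof (cases "j = 0")
    case True
    then show ?thesis by (auto simp: A_def B_def K_def space_PiM)
  next
    case False
    have "reaches_depth d n s (\<lambda>u. restrict \<omega> (K j) ([j - 1] @ u))
        = reaches_depth d n s (shift (j - 1) \<omega>)" for \<omega>
      by (rule reaches_depth_cong) (use False that in \<open>auto simp: K_def shift_def L_def\<close>)
    then show ?thesis using False by (auto simp: A_def B_def space_PiM)
  qed
  have "P.prob (\<Inter>j\<in>L. (\<lambda>\<omega>. restrict \<omega> (K j)) -` A j \<inter> space ?M)
      = (\<Prod>j\<in>L. P.prob ((\<lambda>\<omega>. restrict \<omega> (K j)) -` A j \<inter> space ?M))"
    by (rule P.indep_varsD[OF ind]) (auto simp: L_def A)
  then have product: "P.prob (\<Inter>j\<in>L. B j) = (\<Prod>j\<in>L. P.prob (B j))"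
    using AB by simp
  have events: "{\<omega> \<in> space ?M. \<omega> [] = r \<and> (\<forall>c<d. \<not> reaches_depth d n s (shift c \<omega>))}
      = (\<Inter>j\<in>L. B j)"
  proof (intro equalityI subsetI)
    fix \<omega> assume "\<omega> \<in> (\<Inter>j\<in>L. B j)"
    then have "\<omega> \<in> B 0" "\<And>c. c < d \<Longrightarrow> \<omega> \<in> B (Suc c)"
      by (auto simp: L_def)
    then show "\<omega> \<in> {\<omega> \<in> space ?M. \<omega> [] = r \<and> (\<forall>c<d. \<not> reaches_depth d n s (shift c \<omega>))}"
      by (auto simp: B_def)
  qed (auto simp: L_def B_def)
  have "measure ?M {\<omega> \<in> space ?M. \<omega> [] = r \<and> (\<forall>c<d. \<not> reaches_depth d n s (shift c \<omega>))}
      = (\<Prod>j\<in>L. P.prob (B j))"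
    unfolding events product ..
  also have "\<dots> = P.prob (B 0) * (\<Prod>c<d. P.prob (B (Suc c)))"
    unfolding L_def by (rule prod.lessThan_Suc_shift)
  also have "\<dots> = pmf p r * extinction_prob d p n s ^ d"
    by (simp add: B_def prob_root_eq prob_child_extinct)
  finally show ?thesis .
qed

text \<open>The basic recursion: conditioning on the root radius r, the origin's effective radius
  is max t r; if it is 0 nothing below is infected, otherwise every child inherits
  max t r - 1 and all d child subtrees must die out independently.\<close>
lemma extinction_prob_Suc:
  "(\<lambda>r. pmf p r * (if max t r = 0 then 1 else extinction_prob d p n (max t r - 1) ^ d))
     sums extinction_prob d p (Suc n) t"
proof -
  let ?M = "cone_space d p"
  interpret P: prob_space ?M by (rule prob_space_cone_space)
  define E where "E r = {\<omega> \<in> space ?M. \<omega> [] = r \<and> \<not> reaches_depth d (Suc n) t \<omega>}" for r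
  have "E r = {\<omega> \<in> space ?M. \<omega> [] = r} \<inter> {\<omega> \<in> space ?M. \<not> reaches_depth d (Suc n) t \<omega>}" for r
    by (auto simp: E_def simp del: reaches_depth.simps)
  then have E: "range E \<subseteq> sets ?M"
    using sets_root_eq sets_reaches_depth(2) by (auto simp del: reaches_depth.simps)
  have "disjoint_family E" by (auto simp: disjoint_family_on_def E_def)
  moreover have "(\<Union>r. E r) = {\<omega> \<in> space ?M. \<not> reaches_depth d (Suc n) t \<omega>}"
    by (auto simp: E_def simp del: reaches_depth.simps)
  moreover have "measure ?M (E r)
      = pmf p r * (if max t r = 0 then 1 else extinction_prob d p n (max t r - 1) ^ d)" for r
  proof (cases "max t r = 0")
    case True
    then have "E r = {\<omega> \<in> space ?M. \<omega> [] = r}" by (auto simp: E_def)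
    then show ?thesis using True by (simp add: prob_root_eq)
  next
    case False
    then have "E r = {\<omega> \<in> space ?M. \<omega> [] = r \<and>
        (\<forall>c<d. \<not> reaches_depth d n (max t r - 1) (shift c \<omega>))}"
      by (auto simp: E_def)
    then show ?thesis using False by (simp only: prob_root_children_extinct if_False)
  qed
  ultimately show ?thesis
    using P.finite_measure_UNION[OF E] unfolding extinction_prob_def by simp
qed

lemma survival_prob_limit:
  "(\<lambda>n. 1 - extinction_prob d p n 0) \<longlonglongrightarrow> prob_space.prob (cone_space d p) (survival d p)"
proof -
  let ?M = "cone_space d p"
  interpret P: prob_space ?M by (rule prob_space_cone_space)
  define S where "S n = {\<omega> \<in> space ?M. reaches_depth d n 0 \<omega>}" for n
  have S: "range S \<subseteq> sets ?M" unfolding S_def using sets_reaches_depth(1) by blast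
  have "decseq S"
    unfolding decseq_Suc_iff S_def using reaches_depth_Suc_imp by blast
  then have "(\<lambda>n. P.prob (S n)) \<longlonglongrightarrow> P.prob (\<Inter>n. S n)"
    by (rule P.finite_Lim_measure_decseq[OF S])
  moreover have "(\<Inter>n. S n) = survival d p"
    unfolding survival_def S_def using infinite_iff_reaches_all_depths by auto
  moreover have "P.prob (S n) = 1 - extinction_prob d p n 0" for n
  proof -
    have "{\<omega> \<in> space ?M. \<not> reaches_depth d n 0 \<omega>} = space ?M - S n"
      unfolding S_def by blast
    then show ?thesis
      using P.prob_compl[of "S n"] S unfolding extinction_prob_def by auto
  qed
  ultimately show ?thesis by simp
qed

section \<open>Generating functions of the radius and a fixed-point lemma\<close>

lemma summable_pmf_nat: "summable (pmf (p :: nat pmf))"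
proof -
  have "summable (\<lambda>x. norm (pmf p x))"
    using integrable_pmf[of UNIV p] by (simp only: integrable_count_space_nat_iff)
  then show ?thesis by simp
qed

lemma expectation_nat_pmf_sums:
  fixes p :: "nat pmf" and h :: "nat \<Rightarrow> real"
  assumes "\<And>r. \<bar>h r\<bar> \<le> B"
  shows "(\<lambda>r. pmf p r * h r) sums measure_pmf.expectation p h"
proof -
  have "summable (\<lambda>x. norm (pmf p x * h x))"
  proof (rule summable_comparison_test')
    show "summable (\<lambda>x. B * pmf p x)" by (rule summable_mult) (rule summable_pmf_nat)
    show "norm (norm (pmf p x * h x)) \<le> B * pmf p x" for x
      using assms[of x] by (simp add: abs_mult mult.commute mult_right_mono)
  qed
  then have "integrable (count_space UNIV) (\<lambda>x. pmf p x * h x)"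
    by (simp only: integrable_count_space_nat_iff)
  moreover have "measure_pmf.expectation p h = integral\<^sup>L (count_space UNIV) (\<lambda>x. pmf p x *\<^sub>R h x)"
    unfolding measure_pmf_eq_density by (rule integral_density) auto
  ultimately show ?thesis using sums_integral_count_space_nat by simp
qed

lemma pmf_nat_sums_1: "pmf (p :: nat pmf) sums 1"
  using expectation_nat_pmf_sums[of "\<lambda>_. 1" 1 p] by simp

definition gen_fun :: "nat pmf \<Rightarrow> (nat \<Rightarrow> nat) \<Rightarrow> real \<Rightarrow> real" where
  "gen_fun p N x = measure_pmf.expectation p (\<lambda>k. x ^ N k)"

lemma gen_fun_sums: "0 \<le> x \<Longrightarrow> x \<le> 1 \<Longrightarrow> (\<lambda>r. pmf p r * x ^ N r) sums gen_fun p N x"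
  unfolding gen_fun_def by (rule expectation_nat_pmf_sums[where B=1]) (simp add: power_le_one)

lemma gen_fun_one: "gen_fun p N 1 = 1"
proof -
  have "pmf p sums gen_fun p N 1" using gen_fun_sums[of 1 p N] by simp
  then show ?thesis using pmf_nat_sums_1 sums_unique2 by blast
qed

lemma gen_fun_mono:
  "0 \<le> x \<Longrightarrow> x \<le> y \<Longrightarrow> y \<le> 1 \<Longrightarrow> gen_fun p N x \<le> gen_fun p N y"
  by (rule sums_le[OF _ gen_fun_sums gen_fun_sums]) (auto intro!: mult_left_mono power_mono)

lemma gen_fun_nonneg: "0 \<le> x \<Longrightarrow> x \<le> 1 \<Longrightarrow> 0 \<le> gen_fun p N x"
  by (rule sums_le[OF _ sums_zero gen_fun_sums]) auto

lemma gen_fun_tendsto: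
  assumes "\<And>n. 0 \<le> xs n" "\<And>n. xs n \<le> 1" "xs \<longlonglongrightarrow> x"
  shows "(\<lambda>n. gen_fun p N (xs n)) \<longlonglongrightarrow> gen_fun p N x"
  unfolding gen_fun_def
proof (rule integral_dominated_convergence[where w="\<lambda>_. 1"])
  show "AE k in measure_pmf p. (\<lambda>n. xs n ^ N k) \<longlonglongrightarrow> x ^ N k"
    using assms(3) by (intro AE_I2 tendsto_power)
  show "AE k in measure_pmf p. norm (xs n ^ N k) \<le> 1" for n
    using assms(1,2)[of n] by (intro AE_I2) (simp add: power_le_one abs_le_iff)
qed simp_all

text \<open>A monotone, sequentially continuous map of [0, a] with G 0 \<ge> 0 and G a \<le> a has a
  fixed point in [0, a]: the limit of the iterates of G starting from 0.\<close>
lemma fixed_point_below: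
  fixes G :: "real \<Rightarrow> real" and a :: real
  assumes a: "0 \<le> a" and G0: "0 \<le> G 0" and Ga: "G a \<le> a"
    and mono: "\<And>x y. 0 \<le> x \<Longrightarrow> x \<le> y \<Longrightarrow> y \<le> a \<Longrightarrow> G x \<le> G y"
    and cont: "\<And>xs x. (\<And>n. 0 \<le> xs n) \<Longrightarrow> (\<And>n. xs n \<le> a) \<Longrightarrow> xs \<longlonglongrightarrow> x
                 \<Longrightarrow> (\<lambda>n. G (xs n)) \<longlonglongrightarrow> G x"
  shows "\<exists>x. 0 \<le> x \<and> x \<le> a \<and> G x = x"
proof -
  define xs where "xs n = (G ^^ n) 0" for n
  have xs_Suc: "xs (Suc n) = G (xs n)" for n by (simp add: xs_def)
  have range: "0 \<le> xs n \<and> xs n \<le> a" for n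
  proof (induction n)
    case 0
    then show ?case using a by (simp add: xs_def)
  next
    case (Suc n)
    have "0 \<le> G (xs n)" using G0 mono[of 0 "xs n"] Suc by linarith
    moreover have "G (xs n) \<le> a" using Ga mono[of "xs n" a] Suc by linarith
    ultimately show ?case by (simp add: xs_Suc)
  qed
  have "xs n \<le> xs (Suc n)" for n
  proof (induction n)
    case 0
    then show ?case using G0 by (simp add: xs_def)
  next
    case (Suc n)
    then show ?case using range[of "Suc n"] range[of n] by (simp only: xs_Suc) (rule mono; simp)
  qed
  then have "incseq xs" by (rule incseq_SucI)
  then have lim: "xs \<longlonglongrightarrow> (SUP n. xs n)"
    by (intro LIMSEQ_incseq_SUP bdd_aboveI2[where M=a]) (use range in auto)
  define x where "x = (SUP n. xs n)"
  have "0 \<le> x" "x \<le> a"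
    using LIMSEQ_le_const[OF lim] LIMSEQ_le_const2[OF lim] range unfolding x_def by auto
  moreover have "G x = x"
  proof (rule LIMSEQ_unique)
    show "(\<lambda>n. G (xs n)) \<longlonglongrightarrow> G x" using cont range lim unfolding x_def by blast
    show "(\<lambda>n. G (xs n)) \<longlonglongrightarrow> x" using LIMSEQ_Suc[OF lim] by (simp add: xs_Suc x_def)
  qed
  ultimately show ?thesis by blast
qed

section \<open>The lower bound on the survival probability\<close>

lemma extinction_prob_le_root:
  fixes \<rho> :: real
  assumes \<rho>: "0 \<le> \<rho>" "\<rho> \<le> 1"
    and fixed: "gen_fun p (\<lambda>k. d ^ k) \<rho> + (1 - \<rho>) * pmf p 0 = \<rho>"
  shows "extinction_prob d p n t \<le> \<rho> ^ (d ^ t)"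
proof (induction n arbitrary: t)
  case 0
  then show ?case using \<rho> by (simp add: extinction_prob_0)
next
  case (Suc n)
  define h where "h r = (if max t r = 0 then 1 else extinction_prob d p n (max t r - 1) ^ d)" for r
  define g where "g r = (if max t r = 0 then 1 else \<rho> ^ (d ^ max t r))" for r
  have h_sums: "(\<lambda>r. pmf p r * h r) sums extinction_prob d p (Suc n) t"
    unfolding h_def by (rule extinction_prob_Suc)
  have hg: "pmf p r * h r \<le> pmf p r * g r" for r
  proof (cases "max t r")
    case (Suc m)
    have "extinction_prob d p n m ^ d \<le> (\<rho> ^ (d ^ m)) ^ d"
      by (rule power_mono[OF Suc.IH extinction_prob_bounds(1)])
    also have "\<dots> = \<rho> ^ (d ^ Suc m)" by (simp add: power_mult[symmetric] mult.commute)
    finally show ?thesis using Suc by (simp add: h_def g_def mult_left_mono)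
  qed (simp add: h_def g_def)
  show ?case
  proof (cases "t = 0")
    case True
    have "(\<lambda>r. pmf p r * \<rho> ^ (d ^ r) + (if r = 0 then pmf p 0 * (1 - \<rho>) else 0))
        sums (gen_fun p (\<lambda>k. d ^ k) \<rho> + pmf p 0 * (1 - \<rho>))"
      by (intro sums_add gen_fun_sums \<rho>) (use sums_single[of 0 "\<lambda>_. pmf p 0 * (1 - \<rho>)"] in simp)
    moreover have "pmf p r * g r
        = pmf p r * \<rho> ^ (d ^ r) + (if r = 0 then pmf p 0 * (1 - \<rho>) else 0)" for r
      using True by (simp add: g_def algebra_simps)
    ultimately have "(\<lambda>r. pmf p r * g r) sums \<rho>" using fixed by (simp add: algebra_simps)
    then show ?thesis using sums_le[OF hg h_sums] True by simp
  next
    case False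
    have "pmf p r * g r \<le> pmf p r * \<rho> ^ (d ^ t)" for r
    proof -
      have "d ^ t \<le> d ^ max t r \<or> d = 0"
        by (cases "d = 0") (auto intro: power_increasing)
      then have "\<rho> ^ (d ^ max t r) \<le> \<rho> ^ (d ^ t)"
        using \<rho> False by (auto intro: power_decreasing simp: zero_power)
      then show ?thesis using False by (simp add: g_def mult_left_mono)
    qed
    then have h_le: "pmf p r * h r \<le> pmf p r * \<rho> ^ (d ^ t)" for r using hg order_trans by blast
    have "(\<lambda>r. pmf p r * \<rho> ^ (d ^ t)) sums (1 * \<rho> ^ (d ^ t))"
      by (rule sums_mult2[OF pmf_nat_sums_1])
    from sums_le[OF h_le h_sums this] show ?thesis by simp
  qed
qed

section \<open>The upper bound on the survival probability\<close>

definition extinction_limit :: "nat \<Rightarrow> nat pmf \<Rightarrow> nat \<Rightarrow> real" where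
  "extinction_limit d p t = (SUP n. extinction_prob d p n t)"

lemma extinction_prob_tendsto: "(\<lambda>n. extinction_prob d p n t) \<longlonglongrightarrow> extinction_limit d p t"
  unfolding extinction_limit_def
  by (intro LIMSEQ_incseq_SUP bdd_aboveI2[where M=1] incseq_SucI
      extinction_prob_bounds(2) extinction_prob_mono)

lemma extinction_limit_bounds: "0 \<le> extinction_limit d p t" "extinction_limit d p t \<le> 1"
  using LIMSEQ_le_const[OF extinction_prob_tendsto] LIMSEQ_le_const2[OF extinction_prob_tendsto]
    extinction_prob_bounds by blast+

text \<open>Inheriting radius j+1 at the root is at worst like having radius 0 at the root and
  radius j at each child: the recursions compare term by term.\<close>
lemma extinction_prob_supermult:
  "extinction_prob d p (Suc n) 0 * extinction_prob d p n j ^ d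
     \<le> extinction_prob d p (Suc n) (Suc j)"
proof -
  define c where "c = extinction_prob d p n j ^ d"
  define h0 where "h0 r = (if r = 0 then 1 else extinction_prob d p n (r - 1) ^ d)" for r
  define hj where "hj r = extinction_prob d p n (max (Suc j) r - 1) ^ d" for r
  have "(\<lambda>r. pmf p r * h0 r) sums extinction_prob d p (Suc n) 0"
    using extinction_prob_Suc[of p 0 d n] unfolding h0_def by (simp only: max_0L)
  then have h0_sums: "(\<lambda>r. pmf p r * h0 r * c) sums (extinction_prob d p (Suc n) 0 * c)"
    by (rule sums_mult2)
  have hj_sums: "(\<lambda>r. pmf p r * hj r) sums extinction_prob d p (Suc n) (Suc j)"
    using extinction_prob_Suc[of p "Suc j" d n] by (simp add: hj_def)
  have c: "0 \<le> c" "c \<le> 1" and h0: "0 \<le> h0 r" "h0 r \<le> 1" for r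
    unfolding c_def h0_def using extinction_prob_bounds by (auto intro: power_le_one)
  have "h0 r * c \<le> hj r" for r
  proof (cases "r \<le> Suc j")
    case True
    then have "hj r = c" by (simp add: hj_def c_def max_def)
    then show ?thesis using h0[of r] c by (simp add: mult_left_le_one_le)
  next
    case False
    then have "hj r = h0 r" by (simp add: hj_def h0_def max_def)
    then show ?thesis using h0[of r] c by (simp add: mult_right_le_one_le)
  qed
  then have "pmf p r * h0 r * c \<le> pmf p r * hj r" for r
    by (simp add: mult.assoc mult_left_mono)
  then show ?thesis using sums_le[OF _ h0_sums hj_sums] by (simp add: c_def)
qed

lemma extinction_limit_supermult:
  "extinction_limit d p 0 * extinction_limit d p j ^ d \<le> extinction_limit d p (Suc j)"
proof (rule LIMSEQ_le)
  show "(\<lambda>n. extinction_prob d p (Suc n) 0 * extinction_prob d p n j ^ d)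
      \<longlonglongrightarrow> extinction_limit d p 0 * extinction_limit d p j ^ d"
    by (intro tendsto_mult tendsto_power LIMSEQ_Suc extinction_prob_tendsto)
  show "(\<lambda>n. extinction_prob d p (Suc n) (Suc j)) \<longlonglongrightarrow> extinction_limit d p (Suc j)"
    by (rule LIMSEQ_Suc[OF extinction_prob_tendsto])
qed (use extinction_prob_supermult in blast)

text \<open>ball_size d k = 1 + d + ... + d^k, the number of vertices of a cone of radius k.\<close>
fun ball_size :: "nat \<Rightarrow> nat \<Rightarrow> nat" where
  "ball_size d 0 = 1"
| "ball_size d (Suc k) = 1 + d * ball_size d k"

lemma ball_size_real: "(real d - 1) * real (ball_size d k) = real d ^ Suc k - 1"
  by (induction k) (simp_all add: algebra_simps)

text \<open>The exponent of the fixed-point equation for \<psi> is the number of vertices of a cone of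
  radius k other than its apex.\<close>
lemma ball_size_exponent:
  assumes "d \<ge> 2"
  shows "real (ball_size d k - 1) = real d / (real d - 1) * (real d ^ k - 1)"
proof (cases k)
  case 0
  then show ?thesis by simp
next
  case (Suc j)
  have "real d - 1 \<noteq> 0" using assms by simp
  moreover have "real d ^ k - 1 = (real d - 1) * real (ball_size d j)"
    using ball_size_real[of d j] Suc by simp
  ultimately have "real d / (real d - 1) * (real d ^ k - 1) = real d * real (ball_size d j)"
    by simp
  then show ?thesis using Suc by simp
qed

lemma extinction_limit_ball: "extinction_limit d p 0 ^ ball_size d k \<le> extinction_limit d p k"
proof (induction k)
  case (Suc k)
  have "extinction_limit d p 0 ^ ball_size d (Suc k)
      = extinction_limit d p 0 * (extinction_limit d p 0 ^ ball_size d k) ^ d"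
    by (simp add: power_mult[symmetric] mult.commute)
  also have "\<dots> \<le> extinction_limit d p 0 * extinction_limit d p k ^ d"
    by (intro mult_left_mono power_mono Suc.IH) (auto intro: extinction_limit_bounds zero_le_power)
  also have "\<dots> \<le> extinction_limit d p (Suc k)" by (rule extinction_limit_supermult)
  finally show ?case .
qed simp

lemma extinction_limit_root:
  "extinction_limit d p 0 = measure_pmf.expectation p
     (\<lambda>r. if r = 0 then 1 else extinction_limit d p (r - 1) ^ d)"
proof (rule LIMSEQ_unique[OF LIMSEQ_Suc[OF extinction_prob_tendsto]])
  define h where "h n r = (if r = 0 then 1 else extinction_prob d p n (r - 1) ^ d)" for n r
  have "(\<lambda>r. pmf p r * h n r) sums extinction_prob d p (Suc n) 0" for n
    using extinction_prob_Suc[of p 0 d n] unfolding h_def by (simp only: max_0L)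
  moreover have "(\<lambda>r. pmf p r * h n r) sums measure_pmf.expectation p (h n)" for n
    by (rule expectation_nat_pmf_sums[where B=1])
      (use extinction_prob_bounds in \<open>simp add: h_def power_le_one\<close>)
  ultimately have "extinction_prob d p (Suc n) 0 = measure_pmf.expectation p (h n)" for n
    using sums_unique2 by blast
  moreover have "(\<lambda>n. measure_pmf.expectation p (h n))
      \<longlonglongrightarrow> measure_pmf.expectation p (\<lambda>r. if r = 0 then 1 else extinction_limit d p (r - 1) ^ d)"
  proof (rule integral_dominated_convergence[where w="\<lambda>_. 1"])
    show "AE r in measure_pmf p. (\<lambda>n. h n r)
        \<longlonglongrightarrow> (if r = 0 then 1 else extinction_limit d p (r - 1) ^ d)"
      unfolding h_def by (intro AE_I2) (auto intro: tendsto_power extinction_prob_tendsto)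
    show "AE r in measure_pmf p. norm (h n r) \<le> 1" for n
      using extinction_prob_bounds by (intro AE_I2) (simp add: h_def power_le_one)
  qed simp_all
  ultimately show "(\<lambda>n. extinction_prob d p (Suc n) 0)
      \<longlonglongrightarrow> measure_pmf.expectation p (\<lambda>r. if r = 0 then 1 else extinction_limit d p (r - 1) ^ d)"
    by simp
qed

lemma gen_fun_extinction_limit:
  "gen_fun p (\<lambda>k. ball_size d k - 1) (extinction_limit d p 0) \<le> extinction_limit d p 0"
proof -
  let ?f = "extinction_limit d p"
  let ?h = "\<lambda>r. if r = 0 then 1 else ?f (r - 1) ^ d"
  have "?f 0 ^ (ball_size d r - 1) \<le> ?h r" for r
  proof (cases r)
    case (Suc j)
    have "?f 0 ^ (ball_size d r - 1) = (?f 0 ^ ball_size d j) ^ d"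
      using Suc by (simp add: power_mult[symmetric] mult.commute)
    also have "\<dots> \<le> ?f j ^ d"
      by (intro power_mono extinction_limit_ball) (simp add: extinction_limit_bounds)
    finally show ?thesis using Suc by simp
  qed simp
  then have le: "pmf p r * ?f 0 ^ (ball_size d r - 1) \<le> pmf p r * ?h r" for r
    by (simp add: mult_left_mono)
  have "(\<lambda>r. pmf p r * ?h r) sums measure_pmf.expectation p ?h"
    by (rule expectation_nat_pmf_sums[where B=1])
      (use extinction_limit_bounds in \<open>simp add: power_le_one\<close>)
  then have h_sums: "(\<lambda>r. pmf p r * ?h r) sums ?f 0"
    by (simp only: extinction_limit_root[symmetric])
  have "(\<lambda>r. pmf p r * ?f 0 ^ (ball_size d r - 1)) sums gen_fun p (\<lambda>k. ball_size d k - 1) (?f 0)"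
    by (rule gen_fun_sums) (rule extinction_limit_bounds)+
  from sums_le[OF le this h_sums] show ?thesis .
qed

lemma cpow_of_nat: "0 \<le> x \<Longrightarrow> cpow x (real m) = x ^ m"
  by (cases "x = 0") (simp_all add: cpow_def powr_realpow)

lemma psi_le_extinction_limit:
  fixes \<psi> :: real
  assumes "d \<ge> 2"
    and minimal: "\<And>x. x \<ge> 0 \<Longrightarrow> measure_pmf.expectation p
           (\<lambda>k. cpow x (real d / (real d - 1) * (real d ^ k - 1))) = x \<Longrightarrow> \<psi> \<le> x"
  shows "\<psi> \<le> extinction_limit d p 0"
proof -
  let ?G = "gen_fun p (\<lambda>k. ball_size d k - 1)" and ?a = "extinction_limit d p 0"
  have a: "0 \<le> ?a" "?a \<le> 1" by (rule extinction_limit_bounds)+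
  have "\<exists>x. 0 \<le> x \<and> x \<le> ?a \<and> ?G x = x"
  proof (rule fixed_point_below)
    show "(\<lambda>n. ?G (xs n)) \<longlonglongrightarrow> ?G x"
      if "\<And>n. 0 \<le> xs n" "\<And>n. xs n \<le> ?a" "xs \<longlonglongrightarrow> x" for xs x
      using that a by (intro gen_fun_tendsto) (auto intro: order_trans)
  qed (use a gen_fun_extinction_limit in \<open>auto intro: gen_fun_nonneg gen_fun_mono\<close>)
  then obtain x where x: "0 \<le> x" "x \<le> ?a" "?G x = x" by blast
  have "cpow x (real d / (real d - 1) * (real d ^ k - 1)) = x ^ (ball_size d k - 1)" for k
    using cpow_of_nat[OF x(1)] ball_size_exponent[OF assms(1)] by metis
  then have "\<psi> \<le> x" using minimal[OF x(1)] x(3) by (simp add: gen_fun_def)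
  then show ?thesis using x(2) by linarith
qed

theorem theorem2:
  fixes d :: nat and p :: "nat pmf" and \<rho> \<psi> :: real
  assumes "d \<ge> 2"
    and "0 < pmf p 0" and "pmf p 0 < 1"
    and "\<rho> \<ge> 0"
    and "measure_pmf.expectation p (\<lambda>k. \<rho> ^ (d ^ k)) + (1 - \<rho>) * pmf p 0 = \<rho>"
    and "\<And>x. x \<ge> 0 \<Longrightarrow> measure_pmf.expectation p (\<lambda>k. x ^ (d ^ k)) + (1 - x) * pmf p 0 = x
           \<Longrightarrow> \<rho> \<le> x"
    and "\<psi> \<ge> 0"
    and "measure_pmf.expectation p
           (\<lambda>k. cpow \<psi> (real d / (real d - 1) * (real d ^ k - 1))) = \<psi>"
    and "\<And>x. x \<ge> 0 \<Longrightarrow> measure_pmf.expectation p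
           (\<lambda>k. cpow x (real d / (real d - 1) * (real d ^ k - 1))) = x \<Longrightarrow> \<psi> \<le> x"
  shows "1 - \<rho> \<le> prob_space.prob (cone_space d p) (survival d p)
       \<and> prob_space.prob (cone_space d p) (survival d p) \<le> 1 - \<psi>"
proof -
  let ?V = "prob_space.prob (cone_space d p) (survival d p)"
  have "\<rho> \<le> 1" using assms(6)[of 1] gen_fun_one[of p "\<lambda>k. d ^ k"] by (simp add: gen_fun_def)
  then have "extinction_prob d p n 0 \<le> \<rho>" for n
    using extinction_prob_le_root[of \<rho> p d n 0] assms(4,5) by (simp add: gen_fun_def)
  then have lower: "1 - \<rho> \<le> ?V"
    by (intro LIMSEQ_le_const[OF survival_prob_limit]) auto
  have "?V = 1 - extinction_limit d p 0"
    using LIMSEQ_unique[OF survival_prob_limit tendsto_diff[OF tendsto_const extinction_prob_tendsto]] .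
  then have upper: "?V \<le> 1 - \<psi>"
    using psi_le_extinction_limit[OF assms(1,9)] by simp
  from lower upper show ?thesis ..
qed

end
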